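(* An instance $I=(\mathcal{G},k,\ell)$ of Multistage Vertex Cover is a yes-instance if and only if there is a directed path from $s$ to $t$ in the configuration graph of $I$.
   Context: A temporal graph $\mathcal{G}$ is a sequence of layers (static graphs) $(G_1,\dots,G_\tau)$ on a common vertex set $V(\mathcal{G})$. Multistage Vertex Cover: given $\mathcal{G}$ and integers $k\in\mathbb{N}$, $\ell\in\mathbb{N}_0$, where throughout $0<k<|V(\mathcal{G})|$, decide whether there is $(S_1,\dots,S_\tau)$ with each $S_i\subseteq V(\mathcal{G})$ a vertex cover of $G_i$, $|S_i|\le k$, and $|S_i\triangle S_{i+1}|\le\ell$ for $i<\tau$ ($\triangle$ = symmetric difference). The configuration graph of $(\mathcal{G},k,\ell)$ is a directed graph $D$ with vertex set $V_1\uplus\cdots\uplus V_\tau\uplus\{s,t\}$ and a map $\gamma$ from $V_1\uplus\cdots\uplus V_\tau$ to subsets of $V(\mathcal{G})$ of size at most $k$ such that: (i) for every $i\in\{1,\dots,\tau\}$, a set $S$ is a vertex cover of $G_i$ of size exactly $k-1$ or $k$ if and only if there is $v\in V_i$ with $\gamma(v)=S$; (ii) there is an arc from $v$ to $w$ if and only if $v\in V_i$, $w\in V_{i+1}$ for some $i$ and $|\gamma(v)\triangle\gamma(w)|\le\ell$; (iii) there is an arc $(s,v)$ for every $v\in V_1$ and an arc $(v,t)$ for every $v\in V_\tau$ (and no other arcs). *)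

theory Defs
  imports Main
begin

text \<open>A temporal graph on the finite vertex set V is a nonempty list of layers;
each layer is given by its edge set, an edge being a 2-element subset of V.
Layer i of the paper (1-based) is list entry i-1.\<close>

definition temporal_graph :: "'a set \<Rightarrow> 'a set set list \<Rightarrow> bool" where
  "temporal_graph V G \<longleftrightarrow> finite V \<and> G \<noteq> [] \<and>
     (\<forall>E\<in>set G. \<forall>e\<in>E. e \<subseteq> V \<and> card e = 2)"

definition vertex_cover :: "'a set \<Rightarrow> 'a set set \<Rightarrow> 'a set \<Rightarrow> bool" where
  "vertex_cover V E S \<longleftrightarrow> S \<subseteq> V \<and> (\<forall>e\<in>E. e \<inter> S \<noteq> {})"

definition symdiff :: "'a set \<Rightarrow> 'a set \<Rightarrow> 'a set" where
  "symdiff A B = (A - B) \<union> (B - A)"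

definition msvc_yes :: "'a set \<Rightarrow> 'a set set list \<Rightarrow> nat \<Rightarrow> nat \<Rightarrow> bool" where
  "msvc_yes V G k l \<longleftrightarrow> (\<exists>Ss :: 'a set list. length Ss = length G \<and>
     (\<forall>i<length G. vertex_cover V (G ! i) (Ss ! i) \<and> card (Ss ! i) \<le> k) \<and>
     (\<forall>i. Suc i < length G \<longrightarrow> card (symdiff (Ss ! i) (Ss ! Suc i)) \<le> l))"

text \<open>Configuration graph: node sets Vs (Vs ! i is V_{i+1}), source s, sink t,
arc set A and labelling gamma, satisfying properties (i)--(iii).\<close>
definition config_graph ::
  "'a set \<Rightarrow> 'a set set list \<Rightarrow> nat \<Rightarrow> nat \<Rightarrow>
   'b set list \<Rightarrow> 'b \<Rightarrow> 'b \<Rightarrow> ('b \<times> 'b) set \<Rightarrow> ('b \<Rightarrow> 'a set) \<Rightarrow> bool" where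
  "config_graph V G k l Vs s t A \<gamma> \<longleftrightarrow>
     length Vs = length G \<and>
     (\<forall>i<length Vs. \<forall>j<length Vs. i \<noteq> j \<longrightarrow> Vs ! i \<inter> Vs ! j = {}) \<and>
     s \<noteq> t \<and> (\<forall>X\<in>set Vs. s \<notin> X \<and> t \<notin> X) \<and>
     (\<forall>X\<in>set Vs. \<forall>v\<in>X. \<gamma> v \<subseteq> V \<and> card (\<gamma> v) \<le> k) \<and>
     (\<forall>i<length G. \<forall>S. (vertex_cover V (G ! i) S \<and> (card S = k - 1 \<or> card S = k))
                          \<longleftrightarrow> (\<exists>v\<in>Vs ! i. \<gamma> v = S)) \<and>
     A = {(v, w). \<exists>i. Suc i < length Vs \<and> v \<in> Vs ! i \<and> w \<in> Vs ! Suc i \<and>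
                        card (symdiff (\<gamma> v) (\<gamma> w)) \<le> l}
         \<union> {(s, v) | v. v \<in> Vs ! 0}
         \<union> {(v, t) | v. v \<in> Vs ! (length Vs - 1)}"

end

theory Submission
  imports Defs
begin

(* Only vertex covers of size k - 1 or k are nodes of the configuration graph, so the content
   of the lemma is that every solution can be padded to one in which no S_i has size at most
   k - 2. Take a maximal run S_p, ..., S_q of such small sets. The set S_(p-1) before the run
   is larger than S_p, so it has an element v missing from S_p; likewise S_(q+1) has an
   element w missing from S_q (at the ends of the sequence, take any vertex, using k < |V|).
   Adding v and w to every set of the run keeps the sizes at most k, does not change the
   symmetric differences inside the run, and at either boundary the element it shares with its
   outside neighbour pays for the other one. Repeating this, a solution maximising the total
   size has all sizes in {k - 1, k}; such solutions are exactly the s-t paths, which pick one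
   node per layer with consecutive labels at distance at most l. *)

definition multistage_seq :: "'a set \<Rightarrow> nat \<Rightarrow> nat \<Rightarrow> nat \<Rightarrow> (nat \<Rightarrow> 'a set) \<Rightarrow> bool" where
  "multistage_seq V n k l f \<longleftrightarrow> (\<forall>m<n. f m \<subseteq> V \<and> card (f m) \<le> k) \<and>
     (\<forall>m. Suc m < n \<longrightarrow> card (symdiff (f m) (f (Suc m))) \<le> l)"

lemma msvc_yes_iff_multistage_seq:
  "msvc_yes V G k l \<longleftrightarrow>
     (\<exists>f. (\<forall>m<length G. vertex_cover V (G ! m) (f m)) \<and> multistage_seq V (length G) k l f)"
proof
  assume "msvc_yes V G k l"
  then obtain Ss where "\<forall>i<length G. vertex_cover V (G ! i) (Ss ! i) \<and> card (Ss ! i) \<le> k"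
    and "\<forall>i. Suc i < length G \<longrightarrow> card (symdiff (Ss ! i) (Ss ! Suc i)) \<le> l"
    unfolding msvc_yes_def by blast
  then have "(\<forall>m<length G. vertex_cover V (G ! m) (Ss ! m)) \<and> multistage_seq V (length G) k l (nth Ss)"
    unfolding multistage_seq_def vertex_cover_def by blast
  then show "\<exists>f. (\<forall>m<length G. vertex_cover V (G ! m) (f m)) \<and> multistage_seq V (length G) k l f"
    by blast
next
  assume "\<exists>f. (\<forall>m<length G. vertex_cover V (G ! m) (f m)) \<and> multistage_seq V (length G) k l f"
  then obtain f where "\<forall>m<length G. vertex_cover V (G ! m) (f m)" "multistage_seq V (length G) k l f"
    by blast
  then show "msvc_yes V G k l"
    unfolding msvc_yes_def multistage_seq_def
    by (intro exI[of _ "map f [0..<length G]"]) simp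
qed

lemma multistage_seqD:
  assumes "multistage_seq V n k l f" "m < n"
  shows "f m \<subseteq> V" "card (f m) \<le> k"
  using assms unfolding multistage_seq_def by auto

lemma vertex_cover_mono: "vertex_cover V E S \<Longrightarrow> S \<subseteq> T \<Longrightarrow> T \<subseteq> V \<Longrightarrow> vertex_cover V E T"
  unfolding vertex_cover_def by blast

lemma finite_symdiff: "finite A \<Longrightarrow> finite B \<Longrightarrow> finite (symdiff A B)"
  unfolding symdiff_def by simp

lemma symdiff_commute: "symdiff A B = symdiff B A"
  unfolding symdiff_def by blast

lemma symdiff_Un_same_subset: "symdiff (A \<union> X) (B \<union> X) \<subseteq> symdiff A B"
  unfolding symdiff_def by blast

lemma card_symdiff_Un_le:
  assumes "finite A" "finite B" "v \<in> A" "v \<notin> B"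
  shows "card (symdiff A (B \<union> {v, w})) \<le> card (symdiff A B)"
proof -
  have fin: "finite (symdiff A B)" and v: "v \<in> symdiff A B"
    using assms unfolding symdiff_def by auto
  have "symdiff A (B \<union> {v, w}) \<subseteq> insert w (symdiff A B - {v})"
    using assms unfolding symdiff_def by blast
  then have "card (symdiff A (B \<union> {v, w})) \<le> card (insert w (symdiff A B - {v}))"
    using fin by (intro card_mono) auto
  also have "\<dots> \<le> Suc (card (symdiff A B - {v}))"
    by (rule card_insert_le_m1) (use fin in auto)
  also have "\<dots> = card (symdiff A B)"
    using fin v by (rule card_Suc_Diff1)
  finally show ?thesis .
qed

lemma run_start_exists:
  fixes P :: "nat \<Rightarrow> bool"
  assumes "P i"
  shows "\<exists>p\<le>i. (\<forall>m. p \<le> m \<and> m \<le> i \<longrightarrow> P m) \<and> (p = 0 \<or> \<not> P (p - 1))"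
  using assms
proof (induction i)
  case 0
  then show ?case by auto
next
  case (Suc i)
  show ?case
  proof (cases "P i")
    case True
    with Suc.IH obtain p where "p \<le> i" "\<forall>m. p \<le> m \<and> m \<le> i \<longrightarrow> P m" "p = 0 \<or> \<not> P (p - 1)"
      by blast
    with Suc.prems show ?thesis by (intro exI[of _ p]) (auto simp: le_Suc_eq)
  next
    case False
    with Suc.prems show ?thesis by (intro exI[of _ "Suc i"]) auto
  qed
qed

lemma run_end_exists:
  fixes P :: "nat \<Rightarrow> bool"
  assumes "P i" "i < n"
  shows "\<exists>q. i \<le> q \<and> q < n \<and> (\<forall>m. i \<le> m \<and> m \<le> q \<longrightarrow> P m) \<and> (Suc q = n \<or> \<not> P (Suc q))"
  using assms
proof (induction "n - i" arbitrary: i rule: less_induct)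
  case less
  show ?case
  proof (cases "Suc i < n \<and> P (Suc i)")
    case True
    then have "n - Suc i < n - i" by linarith
    with less.hyps True obtain q where q: "Suc i \<le> q" "q < n"
      "\<forall>m. Suc i \<le> m \<and> m \<le> q \<longrightarrow> P m" "Suc q = n \<or> \<not> P (Suc q)"
      by blast
    have "\<forall>m. i \<le> m \<and> m \<le> q \<longrightarrow> P m"
      using q(3) less.prems(1) by (metis le_antisym not_less_eq_eq)
    with q show ?thesis by (intro exI[of _ q]) auto
  next
    case False
    with less.prems show ?thesis by (intro exI[of _ i]) auto
  qed
qed

definition pad_run :: "(nat \<Rightarrow> 'a set) \<Rightarrow> nat \<Rightarrow> nat \<Rightarrow> 'a set \<Rightarrow> nat \<Rightarrow> 'a set" where
  "pad_run f p q X m = (if p \<le> m \<and> m \<le> q then f m \<union> X else f m)"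

lemma card_symdiff_pad_run_le:
  assumes fin: "finite (f m)" "finite (f (Suc m))" and "p \<le> q"
    and left: "Suc m = p \<Longrightarrow> v \<in> f m \<and> v \<notin> f (Suc m)"
    and right: "m = q \<Longrightarrow> w \<in> f (Suc m) \<and> w \<notin> f m"
  shows "card (symdiff (pad_run f p q {v, w} m) (pad_run f p q {v, w} (Suc m)))
           \<le> card (symdiff (f m) (f (Suc m)))"
proof -
  let ?g = "pad_run f p q {v, w}"
  consider (inside) "p \<le> m" "Suc m \<le> q" | (at_start) "Suc m = p" | (at_end) "m = q"
    | (outside) "\<not> (p \<le> m \<and> m \<le> q)" "\<not> (p \<le> Suc m \<and> Suc m \<le> q)"
    by linarith
  then show ?thesis
  proof cases
    case inside
    then have "?g m = f m \<union> {v, w}" "?g (Suc m) = f (Suc m) \<union> {v, w}" by (auto simp: pad_run_def)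
    then have "symdiff (?g m) (?g (Suc m)) \<subseteq> symdiff (f m) (f (Suc m))"
      by (simp only: symdiff_Un_same_subset)
    then show ?thesis using fin by (intro card_mono finite_symdiff)
  next
    case at_start
    then have g: "?g m = f m" "?g (Suc m) = f (Suc m) \<union> {v, w}"
      using \<open>p \<le> q\<close> by (auto simp: pad_run_def)
    from fin left[OF at_start] show ?thesis unfolding g by (intro card_symdiff_Un_le) auto
  next
    case at_end
    then have g: "?g m = f m \<union> {w, v}" "?g (Suc m) = f (Suc m)"
      using \<open>p \<le> q\<close> by (auto simp: pad_run_def insert_commute)
    from fin right[OF at_end]
    have "card (symdiff (f (Suc m)) (f m \<union> {w, v})) \<le> card (symdiff (f (Suc m)) (f m))"
      by (intro card_symdiff_Un_le) auto
    then show ?thesis unfolding g by (simp only: symdiff_commute)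
  next
    case outside
    then show ?thesis by (auto simp: pad_run_def)
  qed
qed

lemma ex_not_mem_of_card_less: "finite B \<Longrightarrow> card B < card A \<Longrightarrow> \<exists>x\<in>A. x \<notin> B"
  by (meson card_mono not_le subsetI)

lemma multistage_seq_entering_element:
  assumes V: "finite V" "k < card V" and f: "multistage_seq V n k l f"
    and r: "r < n" "card (f r) + 2 \<le> k"
  obtains x where "x \<in> V" "x \<notin> f r" "j < n \<Longrightarrow> k < card (f j) + 2 \<Longrightarrow> x \<in> f j"
proof -
  have fin: "finite (f r)" using multistage_seqD(1)[OF f r(1)] V(1) finite_subset by blast
  show ?thesis
  proof (cases "j < n \<and> k < card (f j) + 2")
    case True
    then have "card (f r) < card (f j)" using r(2) by linarith
    then obtain x where "x \<in> f j" "x \<notin> f r" using ex_not_mem_of_card_less[OF fin] by blast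
    then show ?thesis using that multistage_seqD(1)[OF f, of j] True by blast
  next
    case False
    have "card (f r) < card V" using r(2) V(2) by linarith
    then show ?thesis using that ex_not_mem_of_card_less[OF fin] False by blast
  qed
qed

lemma multistage_seq_grow:
  assumes V: "finite V" "k < card V" and f: "multistage_seq V n k l f"
    and i: "i < n" "card (f i) + 2 \<le> k"
  obtains g where "multistage_seq V n k l g" "\<forall>m<n. f m \<subseteq> g m" "\<exists>m<n. f m \<noteq> g m"
proof -
  let ?P = "\<lambda>m. card (f m) + 2 \<le> k"
  obtain p where p: "p \<le> i" "\<forall>m. p \<le> m \<and> m \<le> i \<longrightarrow> ?P m" "p = 0 \<or> \<not> ?P (p - 1)"
    using run_start_exists[of ?P i] i by blast
  obtain q where q: "i \<le> q" "q < n" "\<forall>m. i \<le> m \<and> m \<le> q \<longrightarrow> ?P m" "Suc q = n \<or> \<not> ?P (Suc q)"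
    using run_end_exists[of ?P i n] i by blast
  have run: "?P m" if "p \<le> m" "m \<le> q" for m
    using p(2) q(3) that nat_le_linear by blast
  have "p < n" "?P p" "q < n" "?P q" using p q run by auto
  obtain v where v: "v \<in> V" "v \<notin> f p" "p - 1 < n \<Longrightarrow> k < card (f (p - 1)) + 2 \<Longrightarrow> v \<in> f (p - 1)"
    using multistage_seq_entering_element[OF V f \<open>p < n\<close> \<open>?P p\<close>, where j = "p - 1"] by blast
  obtain w where w: "w \<in> V" "w \<notin> f q" "Suc q < n \<Longrightarrow> k < card (f (Suc q)) + 2 \<Longrightarrow> w \<in> f (Suc q)"
    using multistage_seq_entering_element[OF V f \<open>q < n\<close> \<open>?P q\<close>, where j = "Suc q"] by blast
  let ?g = "pad_run f p q {v, w}"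
  have fin: "finite (f m)" if "m < n" for m
    using multistage_seqD(1)[OF f that] V(1) finite_subset by blast
  have "multistage_seq V n k l ?g"
    unfolding multistage_seq_def
  proof (intro conjI allI impI)
    fix m assume "m < n"
    then show "?g m \<subseteq> V" using multistage_seqD(1)[OF f] v w by (simp add: pad_run_def)
    have "card (f m \<union> {v, w}) \<le> card (f m) + 2"
      using card_Un_le[of "f m" "{v, w}"] card_insert_le_m1[of 2 "{w}" v] by simp
    then show "card (?g m) \<le> k"
      using run[of m] multistage_seqD(2)[OF f \<open>m < n\<close>] by (auto simp: pad_run_def)
  next
    fix m assume m: "Suc m < n"
    have "card (symdiff (?g m) (?g (Suc m))) \<le> card (symdiff (f m) (f (Suc m)))"
      proof (rule card_symdiff_pad_run_le)
      show "finite (f m)" "finite (f (Suc m))" "p \<le> q" using fin m p(1) q(1) by auto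
      show "v \<in> f m \<and> v \<notin> f (Suc m)" if "Suc m = p"
        using v p(3) that \<open>p < n\<close> by (auto simp: not_le)
      show "w \<in> f (Suc m) \<and> w \<notin> f m" if "m = q"
        using w q(4) that m by (auto simp: not_le)
    qed
    also have "\<dots> \<le> l" using f m unfolding multistage_seq_def by blast
    finally show "card (symdiff (?g m) (?g (Suc m))) \<le> l" .
  qed
  moreover have "\<forall>m<n. f m \<subseteq> ?g m" by (auto simp: pad_run_def)
  moreover have "f p \<noteq> ?g p" using v(2) p q by (auto simp: pad_run_def)
  ultimately show ?thesis using that p q by (meson le_trans order.strict_trans1)
qed

lemma multistage_seq_pad:
  assumes V: "finite V" "k < card V" and f: "multistage_seq V n k l f"
  obtains g where "multistage_seq V n k l g" "\<forall>m<n. f m \<subseteq> g m \<and> k \<le> card (g m) + 1"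
proof -
  define extends where "extends g \<longleftrightarrow> multistage_seq V n k l g \<and> (\<forall>m<n. f m \<subseteq> g m)" for g
  define deficit where "deficit g = (\<Sum>m<n. k - card (g m))" for g :: "nat \<Rightarrow> 'a set"
  have "extends f" using f unfolding extends_def by blast
  from ex_has_least_nat[of extends f deficit, OF this]
  obtain g where g: "extends g" and g_min: "\<forall>h. extends h \<longrightarrow> deficit g \<le> deficit h"
    by blast
  have "k \<le> card (g i) + 1" if i: "i < n" for i
  proof (rule ccontr)
    assume "\<not> ?thesis"
    then have "card (g i) + 2 \<le> k" by linarith
    moreover have "multistage_seq V n k l g" using g unfolding extends_def by blast
    ultimately obtain h where h: "multistage_seq V n k l h" "\<forall>m<n. g m \<subseteq> h m" "\<exists>m<n. g m \<noteq> h m"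
      using multistage_seq_grow[OF V _ i] by blast
    have "extends h" using g h(1,2) unfolding extends_def by blast
    have fin_h: "finite (h m)" if "m < n" for m
      using multistage_seqD(1)[OF h(1) that] V(1) finite_subset by blast
    have card_le: "card (g m) \<le> card (h m)" if "m < n" for m
      using card_mono[OF fin_h[OF that]] h(2) that by blast
    have "deficit h < deficit g"
      unfolding deficit_def
    proof (rule sum_strict_mono_ex1)
      show "\<forall>m\<in>{..<n}. k - card (h m) \<le> k - card (g m)"
        using card_le by (simp add: diff_le_mono2)
      from h(3) obtain m where m: "m < n" "g m \<subset> h m" using h(2) by blast
      then have "card (g m) < card (h m)" using fin_h by (intro psubset_card_mono) auto
      then show "\<exists>m\<in>{..<n}. k - card (h m) < k - card (g m)"
        using m(1) multistage_seqD(2)[OF h(1) m(1)] by (intro bexI[of _ m]) auto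
    qed simp
    with g_min \<open>extends h\<close> show False by (simp add: not_le[symmetric])
  qed
  with g show ?thesis using that unfolding extends_def by blast
qed

lemma msvc_yes_iff_tight_seq:
  assumes "finite V" "k < card V"
  shows "msvc_yes V G k l \<longleftrightarrow>
    (\<exists>f. (\<forall>m<length G. vertex_cover V (G ! m) (f m) \<and> k \<le> card (f m) + 1) \<and>
         multistage_seq V (length G) k l f)"
  unfolding msvc_yes_iff_multistage_seq
proof safe
  fix f assume cover: "\<forall>m<length G. vertex_cover V (G ! m) (f m)"
    and f: "multistage_seq V (length G) k l f"
  obtain g where g: "multistage_seq V (length G) k l g"
    "\<forall>m<length G. f m \<subseteq> g m \<and> k \<le> card (g m) + 1"
    using multistage_seq_pad[OF assms f] .
  have "vertex_cover V (G ! m) (g m)" if "m < length G" for m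
    using vertex_cover_mono[of V "G ! m" "f m" "g m"] cover g(2) multistage_seqD(1)[OF g(1) that] that
    by blast
  with g show "\<exists>f. (\<forall>m<length G. vertex_cover V (G ! m) (f m) \<and> k \<le> card (f m) + 1) \<and>
         multistage_seq V (length G) k l f" by blast
qed blast

definition layered_arcs :: "'b set list \<Rightarrow> ('b \<Rightarrow> 'b \<Rightarrow> bool) \<Rightarrow> 'b \<Rightarrow> 'b \<Rightarrow> ('b \<times> 'b) set" where
  "layered_arcs Vs R s t =
     {(v, w). \<exists>i. Suc i < length Vs \<and> v \<in> Vs ! i \<and> w \<in> Vs ! Suc i \<and> R v w}
     \<union> {(s, v) | v. v \<in> Vs ! 0} \<union> {(v, t) | v. v \<in> Vs ! (length Vs - 1)}"

definition layered_walk :: "'b set list \<Rightarrow> ('b \<Rightarrow> 'b \<Rightarrow> bool) \<Rightarrow> nat \<Rightarrow> (nat \<Rightarrow> 'b) \<Rightarrow> bool" where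
  "layered_walk Vs R j h \<longleftrightarrow> (\<forall>m\<le>j. h m \<in> Vs ! m) \<and> (\<forall>m<j. R (h m) (h (Suc m)))"

locale layered_digraph =
  fixes Vs :: "'b set list" and s t :: 'b
  assumes nonempty: "Vs \<noteq> []"
    and disjoint: "\<And>i j. i < length Vs \<Longrightarrow> j < length Vs \<Longrightarrow> i \<noteq> j \<Longrightarrow> Vs ! i \<inter> Vs ! j = {}"
    and source_outside: "\<And>i. i < length Vs \<Longrightarrow> s \<notin> Vs ! i"
    and sink_outside: "\<And>i. i < length Vs \<Longrightarrow> t \<notin> Vs ! i"
begin

lemma layer_unique: "i < length Vs \<Longrightarrow> j < length Vs \<Longrightarrow> v \<in> Vs ! i \<Longrightarrow> v \<in> Vs ! j \<Longrightarrow> i = j"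
  using disjoint by blast

lemma arc_into_layer:
  assumes "(y, z) \<in> layered_arcs Vs R s t" "i < length Vs" "z \<in> Vs ! i"
  shows "(i = 0 \<and> y = s) \<or> (\<exists>j. i = Suc j \<and> y \<in> Vs ! j \<and> R y z)"
  using assms sink_outside layer_unique[of i] nonempty
  unfolding layered_arcs_def by (fastforce simp: Suc_lessD)

lemma arc_into_sink: "(y, t) \<in> layered_arcs Vs R s t \<Longrightarrow> y \<in> Vs ! (length Vs - 1)"
  using sink_outside nonempty unfolding layered_arcs_def by (fastforce simp: Suc_lessD)

lemma walk_imp_path:
  assumes "layered_walk Vs R (length Vs - 1) h"
  shows "(s, t) \<in> (layered_arcs Vs R s t)\<^sup>+"
proof -
  let ?A = "layered_arcs Vs R s t"
  have "(s, h m) \<in> ?A\<^sup>+" if "m < length Vs" for m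
    using that
  proof (induction m)
    case 0
    then have "(s, h 0) \<in> ?A" using assms unfolding layered_walk_def layered_arcs_def by auto
    then show ?case ..
  next
    case (Suc m)
    then have "(h m, h (Suc m)) \<in> ?A" using assms unfolding layered_walk_def layered_arcs_def by auto
    with Suc show ?case by (meson Suc_lessD trancl_into_trancl)
  qed
  moreover have "(h (length Vs - 1), t) \<in> ?A"
    using assms unfolding layered_walk_def layered_arcs_def by auto
  ultimately show ?thesis using nonempty by (meson diff_less length_greater_0_conv less_one trancl_into_trancl)
qed

lemma path_into_layer_imp_walk:
  assumes "(s, w) \<in> (layered_arcs Vs R s t)\<^sup>+"
  shows "i < length Vs \<Longrightarrow> w \<in> Vs ! i \<Longrightarrow> \<exists>h. layered_walk Vs R i h \<and> h i = w"
  using assms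
proof (induction arbitrary: i rule: trancl_induct)
  case (base z)
  have "i = 0"
    using arc_into_layer[OF base] base.prems(1) by (metis Suc_lessD source_outside)
  with base show ?case by (intro exI[of _ "\<lambda>_. z"]) (simp add: layered_walk_def)
next
  case (step y z)
  from arc_into_layer[OF step.hyps(2) step.prems] show ?case
  proof (elim disjE exE conjE)
    assume "i = 0"
    with step.prems show ?case by (intro exI[of _ "\<lambda>_. z"]) (simp add: layered_walk_def)
  next
    fix j assume j: "i = Suc j" "y \<in> Vs ! j" "R y z"
    with step.IH step.prems(1) obtain h where h: "layered_walk Vs R j h" "h j = y"
      using Suc_lessD by blast
    have "layered_walk Vs R i (h(i := z))"
      using h j step.prems unfolding layered_walk_def by (auto simp: le_Suc_eq)
    then show ?case by auto
  qed
qed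

lemma path_imp_walk:
  assumes "(s, t) \<in> (layered_arcs Vs R s t)\<^sup>+"
  shows "\<exists>h. layered_walk Vs R (length Vs - 1) h"
  using assms
proof (cases rule: tranclE)
  case base
  then show ?thesis using arc_into_sink source_outside nonempty by fastforce
next
  case (step y)
  have "length Vs - 1 < length Vs" using nonempty by simp
  with step show ?thesis using arc_into_sink path_into_layer_imp_walk by blast
qed

lemma path_iff_walk: "(s, t) \<in> (layered_arcs Vs R s t)\<^sup>+ \<longleftrightarrow> (\<exists>h. layered_walk Vs R (length Vs - 1) h)"
  using path_imp_walk walk_imp_path by blast

end

lemma config_graph_layered:
  assumes C: "config_graph V G k l Vs s t A \<gamma>" and G: "G \<noteq> []"
  shows "layered_digraph Vs s t"
    and "A = layered_arcs Vs (\<lambda>v w. card (symdiff (\<gamma> v) (\<gamma> w)) \<le> l) s t"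
proof -
  have len: "length Vs = length G" using C unfolding config_graph_def by blast
  show "layered_digraph Vs s t"
  proof
    show "Vs \<noteq> []" using G len by auto
  qed (use C in \<open>auto simp: config_graph_def\<close>)
  show "A = layered_arcs Vs (\<lambda>v w. card (symdiff (\<gamma> v) (\<gamma> w)) \<le> l) s t"
    using C unfolding config_graph_def layered_arcs_def by blast
qed

lemma config_graph_walk_iff:
  assumes C: "config_graph V G k l Vs s t A \<gamma>" and G: "G \<noteq> []"
  shows "(\<exists>h. layered_walk Vs (\<lambda>v w. card (symdiff (\<gamma> v) (\<gamma> w)) \<le> l) (length Vs - 1) h) \<longleftrightarrow>
    (\<exists>f. (\<forall>m<length G. vertex_cover V (G ! m) (f m) \<and> k \<le> card (f m) + 1) \<and>
         multistage_seq V (length G) k l f)"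
    (is "(\<exists>h. layered_walk Vs ?R _ h) \<longleftrightarrow> _")
proof -
  have len: "length Vs = length G" using C unfolding config_graph_def by blast
  have label: "\<gamma> v \<subseteq> V \<and> card (\<gamma> v) \<le> k" if "m < length G" "v \<in> Vs ! m" for m v
    using C that len nth_mem unfolding config_graph_def by metis
  have layer: "(vertex_cover V (G ! m) S \<and> (card S = k - 1 \<or> card S = k)) \<longleftrightarrow> (\<exists>v\<in>Vs ! m. \<gamma> v = S)"
    if "m < length G" for m S
    using C that unfolding config_graph_def by blast
  have index: "m \<le> length Vs - 1 \<longleftrightarrow> m < length G" "m < length Vs - 1 \<longleftrightarrow> Suc m < length G" for m
    using G len by (cases G; auto)+
  show ?thesis
  proof
    assume "\<exists>h. layered_walk Vs ?R (length Vs - 1) h"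
    then obtain h where h: "layered_walk Vs ?R (length Vs - 1) h" ..
    have "vertex_cover V (G ! m) (\<gamma> (h m)) \<and> k \<le> card (\<gamma> (h m)) + 1 \<and>
        \<gamma> (h m) \<subseteq> V \<and> card (\<gamma> (h m)) \<le> k" if "m < length G" for m
      using h layer[OF that, of "\<gamma> (h m)"] label[OF that, of "h m"] that
      unfolding index layered_walk_def by auto
    moreover have "card (symdiff (\<gamma> (h m)) (\<gamma> (h (Suc m)))) \<le> l" if "Suc m < length G" for m
      using h that unfolding index layered_walk_def by simp
    ultimately show "\<exists>f. (\<forall>m<length G. vertex_cover V (G ! m) (f m) \<and> k \<le> card (f m) + 1) \<and>
         multistage_seq V (length G) k l f"
      unfolding multistage_seq_def by (intro exI[of _ "\<gamma> \<circ> h"]) simp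
  next
    assume "\<exists>f. (\<forall>m<length G. vertex_cover V (G ! m) (f m) \<and> k \<le> card (f m) + 1) \<and>
         multistage_seq V (length G) k l f"
    then obtain f where cover: "\<forall>m<length G. vertex_cover V (G ! m) (f m) \<and> k \<le> card (f m) + 1"
      and f: "multistage_seq V (length G) k l f" by blast
    have "\<exists>v\<in>Vs ! m. \<gamma> v = f m" if "m < length G" for m
    proof -
      have "vertex_cover V (G ! m) (f m)" "k \<le> card (f m) + 1" using cover that by auto
      moreover have "card (f m) \<le> k" using f that by (rule multistage_seqD(2))
      ultimately show ?thesis using layer[OF that, of "f m"] by linarith
    qed
    then obtain h where h: "\<And>m. m < length G \<Longrightarrow> h m \<in> Vs ! m \<and> \<gamma> (h m) = f m" by metis
    have "layered_walk Vs ?R (length Vs - 1) h"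
      using h f unfolding index layered_walk_def multistage_seq_def by simp
    then show "\<exists>h. layered_walk Vs ?R (length Vs - 1) h" by blast
  qed
qed

theorem lemma14:
  fixes V :: "'a set" and G :: "'a set set list" and k l :: nat
    and Vs :: "'b set list" and s t :: 'b and A :: "('b \<times> 'b) set" and \<gamma> :: "'b \<Rightarrow> 'a set"
  assumes "temporal_graph V G"
    and "0 < k" and "k < card V"
    and "config_graph V G k l Vs s t A \<gamma>"
  shows "msvc_yes V G k l \<longleftrightarrow> (s, t) \<in> A\<^sup>+"
proof -
  have V: "finite V" and G: "G \<noteq> []" using assms(1) unfolding temporal_graph_def by auto
  interpret layered_digraph Vs s t using config_graph_layered(1)[OF assms(4) G] .
  have "msvc_yes V G k l \<longleftrightarrow>
      (\<exists>f. (\<forall>m<length G. vertex_cover V (G ! m) (f m) \<and> k \<le> card (f m) + 1) \<and>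
           multistage_seq V (length G) k l f)"
    using msvc_yes_iff_tight_seq[OF V assms(3)] .
  also have "\<dots> \<longleftrightarrow> (\<exists>h. layered_walk Vs (\<lambda>v w. card (symdiff (\<gamma> v) (\<gamma> w)) \<le> l) (length Vs - 1) h)"
    using config_graph_walk_iff[OF assms(4) G] by simp
  also have "\<dots> \<longleftrightarrow> (s, t) \<in> A\<^sup>+"
    using path_iff_walk config_graph_layered(2)[OF assms(4) G] by simp
  finally show ?thesis .
qed

end
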